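(* For $1\le r\le n$, $$b_{n,2}(\Delta_{n-r})=\frac{n!}{(n-r)!}.$$
   Context: $B_n^+$ is the positive braid monoid with generators $\sigma_1,\dots,\sigma_{n-1}$ and relations $\sigma_i\sigma_j=\sigma_j\sigma_i$ ($|i-j|\ge2$), $\sigma_i\sigma_j\sigma_i=\sigma_j\sigma_i\sigma_j$ ($|i-j|=1$). $\Delta_1=1$, $\Delta_m=\sigma_1\cdots\sigma_{m-1}\Delta_{m-1}$, with the convention $\Delta_0=1$; $\Delta_m$ is viewed in $B_n^+$ for $m\le n$. Simple $n$-braids are the left (equivalently right) divisors of $\Delta_n$ in $B_n^+$. For simple $x$, $D_L(x)$ (resp. $D_R(x)$) is the set of $i\in\{1,\dots,n-1\}$ with $\sigma_i$ a left (resp. right) divisor of $x$. A sequence $(x_1,\dots,x_d)$ of simple $n$-braids is normal if $x_k=\gcd(\Delta_n,x_k\cdots x_d)$ (greatest common left divisor) for each $k$; equivalently $D_R(x_k)\supseteq D_L(x_{k+1})$ for all $k<d$. For a simple $n$-braid $x$, $b_{n,d}(x)$ is the number of normal sequences $(x_1,\dots,x_{d-1},x)$ of simple $n$-braids. *)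

theory Defs
  imports Main
begin

(* Positive braid words on n strands: lists over the generator indices 1..n-1
   (the letter i stands for sigma_i). *)
definition gens :: "nat \<Rightarrow> nat set" where
  "gens n = {1..<n}"

definition braid_rel :: "nat \<Rightarrow> (nat list \<times> nat list) set" where
  "braid_rel n =
     {([i, j], [j, i]) | i j. i \<in> gens n \<and> j \<in> gens n \<and> (i \<ge> j + 2 \<or> j \<ge> i + 2)} \<union>
     {([i, j, i], [j, i, j]) | i j. i \<in> gens n \<and> j \<in> gens n \<and> (i = j + 1 \<or> j = i + 1)}"

definition braid_step :: "nat \<Rightarrow> (nat list \<times> nat list) set" where
  "braid_step n = {(u @ a @ v, u @ b @ v) | u a b v.
      u \<in> lists (gens n) \<and> v \<in> lists (gens n) \<and> (a, b) \<in> braid_rel n}"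

definition braid_eq :: "nat \<Rightarrow> (nat list \<times> nat list) set" where
  "braid_eq n = (braid_step n \<union> (braid_step n)\<inverse>)\<^sup>*"

(* the element of B_n^+ represented by a word *)
definition braid_cls :: "nat \<Rightarrow> nat list \<Rightarrow> nat list set" where
  "braid_cls n w = {v \<in> lists (gens n). (w, v) \<in> braid_eq n}"

definition left_div :: "nat \<Rightarrow> nat list \<Rightarrow> nat list \<Rightarrow> bool" where
  "left_div n x y \<longleftrightarrow> (\<exists>z \<in> lists (gens n). (x @ z, y) \<in> braid_eq n)"

definition right_div :: "nat \<Rightarrow> nat list \<Rightarrow> nat list \<Rightarrow> bool" where
  "right_div n x y \<longleftrightarrow> (\<exists>z \<in> lists (gens n). (z @ x, y) \<in> braid_eq n)"

fun Delta :: "nat \<Rightarrow> nat list" where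
  "Delta 0 = []"
| "Delta (Suc m) = [1..<Suc m] @ Delta m"

definition simple :: "nat \<Rightarrow> nat list \<Rightarrow> bool" where
  "simple n x \<longleftrightarrow> x \<in> lists (gens n) \<and> left_div n x (Delta n)"

definition DL :: "nat \<Rightarrow> nat list \<Rightarrow> nat set" where
  "DL n x = {i \<in> gens n. left_div n [i] x}"

definition DR :: "nat \<Rightarrow> nat list \<Rightarrow> nat set" where
  "DR n x = {i \<in> gens n. right_div n [i] x}"

definition normal_seq :: "nat \<Rightarrow> nat list list \<Rightarrow> bool" where
  "normal_seq n ws \<longleftrightarrow> (\<forall>w \<in> set ws. simple n w) \<and>
     (\<forall>k. Suc k < length ws \<longrightarrow> DL n (ws ! Suc k) \<subseteq> DR n (ws ! k))"

(* b_{n,d}(x): number of normal sequences (x_1,...,x_{d-1},x) of simple braids,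
   counted as sequences of elements of B_n^+ (equivalence classes of words) *)
definition b :: "nat \<Rightarrow> nat \<Rightarrow> nat list \<Rightarrow> nat" where
  "b n d x = card {map (braid_cls n) ws | ws.
      length ws = d \<and> normal_seq n ws \<and> (last ws, x) \<in> braid_eq n}"

end

(*
  B_n^+ acts on arrangements of 0, ..., n-1, the generator sigma_i swapping the entries in
  positions i - 1 and i. A word is simple exactly when it is reduced, i.e. its length equals the
  number of inversions of the arrangement it produces, and by Matsumoto's theorem reduced words
  producing the same arrangement are equal in B_n^+. So simple braids are the permutations of
  0, ..., n-1, and sigma_i right-divides a simple braid exactly when its permutation has a descent
  at i. As D_L(Delta_(n-r)) = {1, ..., n-r-1}, the normal pairs (x, Delta_(n-r)) correspond to the
  permutations whose first n-r entries decrease; such a permutation is determined by its last r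
  entries, an arbitrary sequence of r distinct elements, and there are n!/(n-r)! of those.
*)

theory Submission
  imports Defs "HOL-Combinatorics.Multiset_Permutations"
begin

section \<open>Adjacent transpositions and inversions\<close>

fun swap_adj :: "nat \<Rightarrow> 'a list \<Rightarrow> 'a list" where
  "swap_adj 0 (x # y # zs) = y # x # zs"
| "swap_adj (Suc k) (x # xs) = x # swap_adj k xs"
| "swap_adj _ xs = xs"

fun inversions :: "'a::linorder list \<Rightarrow> nat" where
  "inversions [] = 0"
| "inversions (x # xs) = length (filter (\<lambda>y. y < x) xs) + inversions xs"

lemma length_swap_adj [simp]: "length (swap_adj k xs) = length xs"
  by (induction k xs rule: swap_adj.induct) auto

lemma set_swap_adj [simp]: "set (swap_adj k xs) = set xs"
  by (induction k xs rule: swap_adj.induct) auto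

lemma distinct_swap_adj [simp]: "distinct (swap_adj k xs) = distinct xs"
  by (induction k xs rule: swap_adj.induct) auto

lemma length_filter_swap_adj [simp]: "length (filter P (swap_adj k xs)) = length (filter P xs)"
  by (induction k xs rule: swap_adj.induct) auto

lemma swap_adj_swap_adj [simp]: "swap_adj k (swap_adj k xs) = xs"
  by (induction k xs rule: swap_adj.induct) (auto elim: swap_adj.elims)

lemma swap_adj_conv_list_update:
  "Suc k < length xs \<Longrightarrow> swap_adj k xs = xs[k := xs ! Suc k, Suc k := xs ! k]"
  by (induction k xs rule: swap_adj.induct) auto

lemma swap_adj_append: "swap_adj (length xs + k) (xs @ ys) = xs @ swap_adj k ys"
  by (induction xs) auto

lemma swap_adj_commute:
  assumes "Suc k < length xs" "Suc j < length xs" "Suc k < j \<or> Suc j < k"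
  shows "swap_adj k (swap_adj j xs) = swap_adj j (swap_adj k xs)"
  using assms by (auto simp: swap_adj_conv_list_update nth_list_update intro!: nth_equalityI)

lemma swap_adj_braid:
  assumes "Suc (Suc k) < length xs"
  shows "swap_adj k (swap_adj (Suc k) (swap_adj k xs)) =
         swap_adj (Suc k) (swap_adj k (swap_adj (Suc k) xs))"
  using assms by (auto simp: swap_adj_conv_list_update nth_list_update intro!: nth_equalityI)

lemma inversions_swap_adj:
  "distinct xs \<Longrightarrow> Suc k < length xs \<Longrightarrow>
   inversions (swap_adj k xs) + (if xs ! Suc k < xs ! k then 1 else 0) =
   inversions xs + (if xs ! k < xs ! Suc k then 1 else 0)"
  by (induction k xs rule: swap_adj.induct) auto

lemma inversions_swap_adj_descent:
  "distinct xs \<Longrightarrow> Suc k < length xs \<Longrightarrow> xs ! Suc k < xs ! k \<Longrightarrow>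
   inversions (swap_adj k xs) + 1 = inversions xs"
  using inversions_swap_adj[of xs k] by auto

lemma inversions_swap_adj_ascent:
  "distinct xs \<Longrightarrow> Suc k < length xs \<Longrightarrow> xs ! k < xs ! Suc k \<Longrightarrow>
   inversions (swap_adj k xs) = inversions xs + 1"
  using inversions_swap_adj[of xs k] by (simp add: less_not_sym)

lemma inversions_swap_adj_le:
  "distinct xs \<Longrightarrow> Suc k < length xs \<Longrightarrow> inversions (swap_adj k xs) \<le> inversions xs + 1"
  using inversions_swap_adj[of xs k] by (auto split: if_splits)

lemma inversions_sorted: "sorted xs \<Longrightarrow> inversions xs = 0"
  by (induction xs) (auto simp: filter_empty_conv)

lemma inversions_append:
  "\<forall>x\<in>set xs. \<forall>y\<in>set ys. x < y \<Longrightarrow> inversions (xs @ ys) = inversions xs + inversions ys"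
proof (induction xs)
  case (Cons a xs)
  then have "filter (\<lambda>y. y < a) ys = []" by (auto simp: filter_empty_conv)
  then show ?case using Cons by simp
qed simp

lemma inversions_le_square: "inversions xs \<le> length xs * length xs"
proof (induction xs)
  case (Cons x xs)
  have "inversions (x # xs) \<le> length xs + length xs * length xs"
    unfolding inversions.simps using Cons.IH by (intro add_le_mono length_filter_le)
  then show ?case by simp
qed simp

section \<open>Braid words acting on arrangements\<close>

definition word_act :: "nat list \<Rightarrow> 'a list \<Rightarrow> 'a list" where
  "word_act w xs = fold (\<lambda>i. swap_adj (i - 1)) w xs"

definition perm_of :: "nat \<Rightarrow> nat list \<Rightarrow> nat list" where
  "perm_of n w = word_act w [0..<n]"

lemma word_act_Nil [simp]: "word_act [] xs = xs"
  by (simp add: word_act_def)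

lemma word_act_Cons [simp]: "word_act (i # w) xs = word_act w (swap_adj (i - 1) xs)"
  by (simp add: word_act_def)

lemma word_act_append [simp]: "word_act (u @ v) xs = word_act v (word_act u xs)"
  by (simp add: word_act_def)

lemma length_word_act [simp]: "length (word_act w xs) = length xs"
  by (induction w arbitrary: xs) auto

lemma set_word_act [simp]: "set (word_act w xs) = set xs"
  by (induction w arbitrary: xs) auto

lemma distinct_word_act [simp]: "distinct (word_act w xs) = distinct xs"
  by (induction w arbitrary: xs) auto

lemma length_perm_of [simp]: "length (perm_of n w) = n"
  by (simp add: perm_of_def)

lemma set_perm_of [simp]: "set (perm_of n w) = {0..<n}"
  by (simp add: perm_of_def)

lemma perm_of_in_permutations: "perm_of n w \<in> permutations_of_set {0..<n}"
  by (auto simp: perm_of_def)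

lemma distinct_perm_of [simp]: "distinct (perm_of n w)"
  by (simp add: perm_of_def)

lemma perm_of_append: "perm_of n (u @ v) = word_act v (perm_of n u)"
  by (simp add: perm_of_def)

lemma perm_of_snoc [simp]: "perm_of n (w @ [i]) = swap_adj (i - 1) (perm_of n w)"
  by (simp add: perm_of_def)

lemma gens_iff: "i \<in> gens n \<longleftrightarrow> 1 \<le> i \<and> i < n"
  by (auto simp: gens_def)

lemma word_act_braid_rel:
  assumes "(p, q) \<in> braid_rel n" "length xs = n"
  shows "word_act p xs = word_act q xs"
  using assms(1) unfolding braid_rel_def
proof (elim UnE CollectE exE conjE)
  fix i j assume "(p, q) = ([i, j], [j, i])" "i \<in> gens n" "j \<in> gens n" "j + 2 \<le> i \<or> i + 2 \<le> j"
  moreover have "swap_adj (j - 1) (swap_adj (i - 1) xs) = swap_adj (i - 1) (swap_adj (j - 1) xs)"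
    by (rule swap_adj_commute) (use calculation assms(2) in \<open>auto simp: gens_iff\<close>)
  ultimately show ?thesis by simp
next
  fix i j assume "(p, q) = ([i, j, i], [j, i, j])" "i \<in> gens n" "j \<in> gens n" "i = j + 1 \<or> j = i + 1"
  then show ?thesis
    using swap_adj_braid[of "i - 1" xs] swap_adj_braid[of "j - 1" xs] assms(2) by (auto simp: gens_iff)
qed

lemma braid_rel_sym: "(p, q) \<in> braid_rel n \<Longrightarrow> (q, p) \<in> braid_rel n"
  unfolding braid_rel_def by auto

lemma braid_rel_rev: "(p, q) \<in> braid_rel n \<Longrightarrow> (rev p, rev q) \<in> braid_rel n"
  unfolding braid_rel_def by auto

lemma length_braid_rel: "(p, q) \<in> braid_rel n \<Longrightarrow> length p = length q"
  unfolding braid_rel_def by auto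

lemma braid_eq_refl [simp]: "(x, x) \<in> braid_eq n"
  unfolding braid_eq_def by simp

lemma braid_eq_trans [trans]: "(x, y) \<in> braid_eq n \<Longrightarrow> (y, z) \<in> braid_eq n \<Longrightarrow> (x, z) \<in> braid_eq n"
  unfolding braid_eq_def by (rule rtrancl_trans)

lemma braid_eq_sym: "(x, y) \<in> braid_eq n \<Longrightarrow> (y, x) \<in> braid_eq n"
  unfolding braid_eq_def by (rule symD[OF sym_rtrancl[OF sym_Un_converse]])

lemma braid_eq_relI:
  "u \<in> lists (gens n) \<Longrightarrow> v \<in> lists (gens n) \<Longrightarrow> (p, q) \<in> braid_rel n \<Longrightarrow>
   (u @ p @ v, u @ q @ v) \<in> braid_eq n"
  unfolding braid_eq_def braid_step_def by blast

lemma braid_step_cases: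
  assumes "(x, y) \<in> braid_step n"
  obtains u p q v where "x = u @ p @ v" "y = u @ q @ v"
    "u \<in> lists (gens n)" "v \<in> lists (gens n)" "(p, q) \<in> braid_rel n"
  using assms unfolding braid_step_def by blast

lemma braid_eq_invariant:
  assumes "\<And>x y. (x, y) \<in> braid_step n \<Longrightarrow> f x = f y" "(x, y) \<in> braid_eq n"
  shows "f x = f y"
  using assms(2) unfolding braid_eq_def
  by (induction rule: rtrancl_induct) (auto dest: assms(1))

lemma braid_eq_map:
  assumes "\<And>x y. (x, y) \<in> braid_step n \<Longrightarrow> (f x, f y) \<in> braid_eq n" "(x, y) \<in> braid_eq n"
  shows "(f x, f y) \<in> braid_eq n"
proof -
  have "(x, y) \<in> (braid_step n \<union> (braid_step n)\<inverse>)\<^sup>*"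
    using assms(2) unfolding braid_eq_def .
  then show ?thesis
  proof (induction rule: rtrancl_induct)
    case (step y z)
    then have "(f y, f z) \<in> braid_eq n"
      using assms(1) braid_eq_sym by blast
    then show ?case using step.IH braid_eq_trans by blast
  qed simp
qed

lemma braid_eq_length:
  assumes "(x, y) \<in> braid_eq n"
  shows "length x = length y"
proof (rule braid_eq_invariant[OF _ assms])
  fix x y assume "(x, y) \<in> braid_step n"
  then show "length x = length y"
    by (elim braid_step_cases) (simp add: length_braid_rel)
qed

lemma braid_eq_perm_of:
  assumes "(x, y) \<in> braid_eq n"
  shows "perm_of n x = perm_of n y"
proof (rule braid_eq_invariant[OF _ assms])
  fix x y assume "(x, y) \<in> braid_step n"
  then show "perm_of n x = perm_of n y"
    by (elim braid_step_cases) (simp add: perm_of_append word_act_braid_rel)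
qed

lemma braid_eq_append_right:
  assumes "(x, y) \<in> braid_eq n" "z \<in> lists (gens n)"
  shows "(x @ z, y @ z) \<in> braid_eq n"
proof (rule braid_eq_map[OF _ assms(1)])
  fix x y assume "(x, y) \<in> braid_step n"
  then show "(x @ z, y @ z) \<in> braid_eq n"
    by (elim braid_step_cases) (use braid_eq_relI[of _ n "_ @ z"] assms(2) in simp)
qed

lemma braid_eq_rev:
  assumes "(x, y) \<in> braid_eq n"
  shows "(rev x, rev y) \<in> braid_eq n"
proof (rule braid_eq_map[OF _ assms])
  fix x y assume "(x, y) \<in> braid_step n"
  then show "(rev x, rev y) \<in> braid_eq n"
    by (elim braid_step_cases) (simp add: braid_eq_relI braid_rel_rev in_lists_conv_set)
qed

lemma braid_eq_iff_right: "(y, y') \<in> braid_eq n \<Longrightarrow> (x, y) \<in> braid_eq n \<longleftrightarrow> (x, y') \<in> braid_eq n"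
  by (meson braid_eq_sym braid_eq_trans)

lemma braid_cls_eq_iff:
  assumes "y \<in> lists (gens n)"
  shows "braid_cls n x = braid_cls n y \<longleftrightarrow> (x, y) \<in> braid_eq n"
proof
  assume "braid_cls n x = braid_cls n y"
  moreover have "y \<in> braid_cls n y" using assms by (simp add: braid_cls_def)
  ultimately have "y \<in> braid_cls n x" by simp
  then show "(x, y) \<in> braid_eq n" by (simp add: braid_cls_def)
next
  assume "(x, y) \<in> braid_eq n"
  then show "braid_cls n x = braid_cls n y"
    unfolding braid_cls_def using braid_eq_iff_right[OF braid_eq_sym] braid_eq_sym by metis
qed

lemma DL_braid_eq: "(y, y') \<in> braid_eq n \<Longrightarrow> DL n y = DL n y'"
  unfolding DL_def left_div_def by (simp add: braid_eq_iff_right)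

lemma left_div_iff_right_div_rev: "left_div n x y \<longleftrightarrow> right_div n (rev x) (rev y)"
proof
  assume "left_div n x y"
  then obtain z where "z \<in> lists (gens n)" "(x @ z, y) \<in> braid_eq n"
    unfolding left_div_def by blast
  then show "right_div n (rev x) (rev y)"
    unfolding right_div_def using braid_eq_rev[of "x @ z" y n] by (intro bexI[of _ "rev z"]) auto
next
  assume "right_div n (rev x) (rev y)"
  then obtain z where "z \<in> lists (gens n)" "(z @ rev x, rev y) \<in> braid_eq n"
    unfolding right_div_def by blast
  then show "left_div n x y"
    unfolding left_div_def using braid_eq_rev[of "z @ rev x" "rev y" n] by (intro bexI[of _ "rev z"]) auto
qed

lemma DL_eq_DR_rev: "DL n y = DR n (rev y)"
  unfolding DL_def DR_def by (simp add: left_div_iff_right_div_rev)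

section \<open>Reduced words and Matsumoto's theorem\<close>

definition descents :: "'a::linorder list \<Rightarrow> nat set" where
  "descents xs = {i. 0 < i \<and> i < length xs \<and> xs ! i < xs ! (i - 1)}"

definition reduced :: "nat \<Rightarrow> nat list \<Rightarrow> bool" where
  "reduced n w \<longleftrightarrow> w \<in> lists (gens n) \<and> inversions (perm_of n w) = length w"

lemma reduced_braid_eq:
  assumes "(x, y) \<in> braid_eq n" "x \<in> lists (gens n)" "reduced n y"
  shows "reduced n x"
  using assms braid_eq_perm_of[OF assms(1)] braid_eq_length[OF assms(1)] by (simp add: reduced_def)

lemma inversions_swap_adj_descents:
  "distinct xs \<Longrightarrow> i \<in> descents xs \<Longrightarrow> inversions (swap_adj (i - 1) xs) + 1 = inversions xs"
  by (rule inversions_swap_adj_descent) (auto simp: descents_def)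

lemma inversions_word_act_le:
  "w \<in> lists (gens n) \<Longrightarrow> distinct xs \<Longrightarrow> length xs = n \<Longrightarrow>
   inversions (word_act w xs) \<le> inversions xs + length w"
proof (induction w arbitrary: xs)
  case (Cons i w)
  have "inversions (swap_adj (i - 1) xs) \<le> inversions xs + 1"
    by (rule inversions_swap_adj_le) (use Cons.prems in \<open>auto simp: gens_iff\<close>)
  moreover have "inversions (word_act w (swap_adj (i - 1) xs)) \<le> inversions (swap_adj (i - 1) xs) + length w"
    by (rule Cons.IH) (use Cons.prems in auto)
  ultimately show ?case by simp
qed simp

lemma reduced_appendD:
  assumes "reduced n (u @ v)"
  shows "reduced n u"
proof -
  have "u \<in> lists (gens n)" "v \<in> lists (gens n)" using assms by (auto simp: reduced_def)
  then have "inversions (perm_of n u) \<le> length u"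
    "inversions (perm_of n (u @ v)) \<le> inversions (perm_of n u) + length v"
    using inversions_word_act_le[of u n "[0..<n]"] inversions_word_act_le[of v n "perm_of n u"]
    by (auto simp: perm_of_def inversions_sorted)
  then show ?thesis using assms \<open>u \<in> lists (gens n)\<close> by (simp add: reduced_def)
qed

lemma reduced_snoc_descent:
  assumes "reduced n (w @ [i])"
  shows "i \<in> descents (perm_of n (w @ [i]))"
proof -
  define L where "L = perm_of n w"
  have i: "0 < i" "i < n" and w: "reduced n w"
    using assms reduced_appendD[OF assms] by (auto simp: reduced_def gens_iff)
  have "\<not> L ! i < L ! (i - 1)"
  proof
    assume "L ! i < L ! (i - 1)"
    then have "inversions (swap_adj (i - 1) L) + 1 = inversions L"
      using inversions_swap_adj_descent[of L "i - 1"] i by (simp add: L_def)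
    then show False using assms w by (simp add: L_def reduced_def)
  qed
  moreover have "L ! (i - 1) \<noteq> L ! i"
    using i by (simp add: L_def nth_eq_iff_index_eq)
  ultimately show ?thesis
    using i by (auto simp: descents_def L_def swap_adj_conv_list_update nth_list_update)
qed

lemma exists_reduced_word:
  assumes "L \<in> permutations_of_set {0..<n}"
  shows "\<exists>w. reduced n w \<and> perm_of n w = L"
  using assms
proof (induction "inversions L" arbitrary: L rule: less_induct)
  case less
  have L: "distinct L" "set L = {0..<n}" "length L = n"
    using less.prems by (auto simp: permutations_of_set_def length_finite_permutations_of_set)
  show ?case
  proof (cases "descents L = {}")
    case False
    then obtain i where i: "i \<in> descents L" by blast
    then have "i \<in> gens n" using L by (auto simp: descents_def gens_iff)
    have dec: "inversions (swap_adj (i - 1) L) + 1 = inversions L"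
      using inversions_swap_adj_descents[OF L(1) i] .
    moreover have "swap_adj (i - 1) L \<in> permutations_of_set {0..<n}"
      using L by (auto simp: permutations_of_set_def)
    ultimately obtain w where "reduced n w" "perm_of n w = swap_adj (i - 1) L"
      using less.hyps[of "swap_adj (i - 1) L"] by auto
    then have "reduced n (w @ [i]) \<and> perm_of n (w @ [i]) = L"
      using dec \<open>i \<in> gens n\<close> by (auto simp: reduced_def)
    then show ?thesis ..
  next
    case True
    have "L ! k \<le> L ! Suc k" if "Suc k < length L" for k
      using True that unfolding descents_def by (auto simp: not_less dest: spec[of _ "Suc k"])
    then have "sorted L"
      unfolding sorted_iff_nth_Suc by blast
    then have "L = [0..<n]"
      using L by (intro sorted_distinct_set_unique) auto
    then have "reduced n [] \<and> perm_of n [] = L"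
      by (simp add: reduced_def perm_of_def inversions_sorted)
    then show ?thesis ..
  qed
qed

lemma braid_rel_lists: "(p, q) \<in> braid_rel n \<Longrightarrow> p \<in> lists (gens n) \<and> q \<in> lists (gens n)"
  unfolding braid_rel_def by auto

lemma adjacent_descents_braid_rel:
  assumes L: "distinct L" "length L = n" and ij: "i \<in> descents L" "Suc i \<in> descents L"
  obtains M where "([i, Suc i, i], [Suc i, i, Suc i]) \<in> braid_rel n"
    "word_act [i, Suc i, i] M = L" "word_act [Suc i, i, Suc i] M = L" "inversions M + 3 = inversions L"
proof -
  define k where "k = i - 1"
  have k: "i = Suc k" "Suc (Suc k) < n" "L ! Suc k < L ! k" "L ! Suc (Suc k) < L ! Suc k"
    using ij L by (auto simp: descents_def k_def)
  define M where "M = swap_adj k (swap_adj (Suc k) (swap_adj k L))"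
  have "([i, Suc i, i], [Suc i, i, Suc i]) \<in> braid_rel n"
    using k by (auto simp: braid_rel_def gens_iff)
  moreover have "word_act [i, Suc i, i] M = L"
    using k by (simp add: M_def)
  moreover have "M = swap_adj (Suc k) (swap_adj k (swap_adj (Suc k) L))"
    unfolding M_def by (rule swap_adj_braid) (use k L in simp)
  then have "word_act [Suc i, i, Suc i] M = L"
    using k by simp
  moreover have "inversions M + 3 = inversions L"
  proof -
    have d: "distinct (swap_adj k L)" "distinct (swap_adj (Suc k) (swap_adj k L))" using L by auto
    have "inversions (swap_adj k L) + 1 = inversions L"
      using inversions_swap_adj_descent[OF L(1)] k L by simp
    moreover have "inversions (swap_adj (Suc k) (swap_adj k L)) + 1 = inversions (swap_adj k L)"
      using inversions_swap_adj_descent[OF d(1), of "Suc k"] k L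
      by (simp add: swap_adj_conv_list_update nth_list_update)
    moreover have "inversions M + 1 = inversions (swap_adj (Suc k) (swap_adj k L))"
      unfolding M_def using inversions_swap_adj_descent[OF d(2), of k] k L
      by (simp add: swap_adj_conv_list_update nth_list_update)
    ultimately show ?thesis by simp
  qed
  ultimately show thesis using that by blast
qed

lemma distant_descents_braid_rel:
  assumes L: "distinct L" "length L = n" and ij: "i \<in> descents L" "j \<in> descents L" "Suc i < j"
  obtains M where "([j, i], [i, j]) \<in> braid_rel n"
    "word_act [j, i] M = L" "word_act [i, j] M = L" "inversions M + 2 = inversions L"
proof -
  define k where "k = i - 1"
  have k: "i = Suc k" "L ! Suc k < L ! k" "j < n" "L ! j < L ! (j - 1)"
    using ij L by (auto simp: descents_def k_def)
  define M where "M = swap_adj (j - 1) (swap_adj k L)"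
  have comm: "swap_adj (j - 1) (swap_adj k L) = swap_adj k (swap_adj (j - 1) L)"
    by (rule swap_adj_commute) (use k ij L in auto)
  have "([j, i], [i, j]) \<in> braid_rel n"
    using k ij by (auto simp: braid_rel_def gens_iff)
  moreover have "word_act [j, i] M = L" using k by (simp add: M_def)
  moreover have "word_act [i, j] M = L" unfolding M_def comm using k by simp
  moreover have "inversions M + 2 = inversions L"
  proof -
    have "inversions (swap_adj k L) + 1 = inversions L"
      using inversions_swap_adj_descent[OF L(1)] k ij L by simp
    moreover have "inversions M + 1 = inversions (swap_adj k L)"
      unfolding M_def using inversions_swap_adj_descent[of "swap_adj k L" "j - 1"] k ij L
      by (simp add: swap_adj_conv_list_update nth_list_update)
    ultimately show ?thesis by simp
  qed
  ultimately show thesis using that by blast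
qed

lemma descent_pair_braid_rel_less:
  assumes "distinct L" "length L = n" "i \<in> descents L" "j \<in> descents L" "i < j"
  obtains p q M where "(p @ [i], q @ [j]) \<in> braid_rel n"
    "word_act (p @ [i]) M = L" "word_act (q @ [j]) M = L"
    "inversions M + length p + 1 = inversions L"
proof (cases "j = Suc i")
  case True
  obtain M where "([i, Suc i, i], [Suc i, i, Suc i]) \<in> braid_rel n"
    "word_act [i, Suc i, i] M = L" "word_act [Suc i, i, Suc i] M = L" "inversions M + 3 = inversions L"
    using adjacent_descents_braid_rel[OF assms(1-3) assms(4)[unfolded True]] .
  then show thesis using that[of "[i, Suc i]" "[Suc i, i]" M] True by simp
next
  case False
  obtain M where "([j, i], [i, j]) \<in> braid_rel n"
    "word_act [j, i] M = L" "word_act [i, j] M = L" "inversions M + 2 = inversions L"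
    using distant_descents_braid_rel[OF assms(1-4)] False assms(5) by (metis Suc_lessI)
  then show thesis using that[of "[j]" "[i]" M] by simp
qed

lemma descent_pair_braid_rel:
  assumes "distinct L" "length L = n" "i \<in> descents L" "j \<in> descents L" "i \<noteq> j"
  obtains p q M where "(p @ [i], q @ [j]) \<in> braid_rel n"
    "word_act (p @ [i]) M = L" "word_act (q @ [j]) M = L"
    "inversions M + length p + 1 = inversions L"
proof (cases "i < j")
  case True
  then show thesis using descent_pair_braid_rel_less[OF assms(1-4)] that by blast
next
  case False
  then obtain p q M where "(p @ [j], q @ [i]) \<in> braid_rel n"
    "word_act (p @ [j]) M = L" "word_act (q @ [i]) M = L"
    "inversions M + length p + 1 = inversions L"
    using descent_pair_braid_rel_less[OF assms(1,2,4,3)] assms(5) by (metis linorder_neqE_nat)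
  moreover have "length q = length p"
    using length_braid_rel[OF calculation(1)] by simp
  ultimately show thesis using that[of q p M] braid_rel_sym by simp
qed

text \<open>The exchange step of Matsumoto's theorem: both last letters are descents of the common
  permutation, so both words can be rewritten to end in the two sides of the commutation or braid
  relation spanned by these letters, after a common reduced prefix.\<close>

lemma reduced_snocs_braid_rel:
  assumes red: "reduced n (u @ [i])" "reduced n (u' @ [j])"
    and perm: "perm_of n (u @ [i]) = perm_of n (u' @ [j])" and "i \<noteq> j"
  obtains x x' where "reduced n x" "perm_of n x = perm_of n u" "reduced n x'" "perm_of n x' = perm_of n u'"
    "(x @ [i], x' @ [j]) \<in> braid_eq n"
proof -
  define L where "L = perm_of n (u @ [i])"
  have ij: "i \<in> descents L" "j \<in> descents L"
    using reduced_snoc_descent[OF red(1)] reduced_snoc_descent[OF red(2)] perm by (simp_all add: L_def)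
  obtain p q M where rel: "(p @ [i], q @ [j]) \<in> braid_rel n"
    and act: "word_act (p @ [i]) M = L" "word_act (q @ [j]) M = L"
    and inv: "inversions M + length p + 1 = inversions L"
    using descent_pair_braid_rel[of L n i j] ij \<open>i \<noteq> j\<close> by (auto simp: L_def)
  have "set M = set L" "distinct M = distinct L"
    by (metis act(1) set_word_act, metis act(1) distinct_word_act)
  then have "M \<in> permutations_of_set {0..<n}"
    by (simp add: L_def permutations_of_set_def)
  then obtain v where v: "reduced n v" "perm_of n v = M"
    using exists_reduced_word by blast
  have pq: "p \<in> lists (gens n)" "q \<in> lists (gens n)" "length q = length p"
    using braid_rel_lists[OF rel] length_braid_rel[OF rel] by auto
  have "word_act p M = swap_adj (i - 1) L" "word_act q M = swap_adj (j - 1) L"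
    using arg_cong[OF act(1), of "swap_adj (i - 1)"] arg_cong[OF act(2), of "swap_adj (j - 1)"]
    by simp_all
  then have perm_vp: "perm_of n (v @ p) = perm_of n u" "perm_of n (v @ q) = perm_of n u'"
    using perm v(2) by (simp_all add: L_def perm_of_append)
  have "length u' = length u"
    using red perm by (simp add: reduced_def)
  then have len_vp: "length (v @ p) = length u" "length (v @ q) = length u'"
    using inv v red(1) pq by (auto simp: L_def reduced_def)
  have "reduced n (v @ p)" "reduced n (v @ q)"
    using reduced_appendD[OF red(1)] reduced_appendD[OF red(2)] perm_vp len_vp v(1) pq
    by (auto simp: reduced_def)
  moreover have "(v @ p @ [i], v @ q @ [j]) \<in> braid_eq n"
    using braid_eq_relI[OF _ _ rel, of v "[]"] v by (simp add: reduced_def)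
  ultimately show thesis using that perm_vp by simp
qed

theorem matsumoto:
  assumes "reduced n w" "reduced n w'" "perm_of n w = perm_of n w'"
  shows "(w, w') \<in> braid_eq n"
  using assms
proof (induction "length w" arbitrary: w w' rule: less_induct)
  case less
  have len: "length w' = length w" using less.prems by (simp add: reduced_def)
  show ?case
  proof (cases w rule: rev_cases)
    case Nil
    then show ?thesis using len by simp
  next
    case (snoc u i)
    then obtain u' j where w': "w' = u' @ [j]" using len by (cases w' rule: rev_cases) auto
    have red: "reduced n u" "reduced n u'"
      using less.prems snoc w' reduced_appendD by blast+
    have gens: "[i] \<in> lists (gens n)" "[j] \<in> lists (gens n)"
      using less.prems snoc w' by (auto simp: reduced_def)
    have IH: "(y, x) \<in> braid_eq n"
      if "length y < length w" "reduced n y" "reduced n x" "perm_of n y = perm_of n x" for x y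
      using less.hyps that by blast
    show ?thesis
    proof (cases "i = j")
      case True
      have "perm_of n u' = perm_of n u"
        using arg_cong[OF less.prems(3), of "swap_adj (i - 1)"] snoc w' True by simp
      then have "(u, u') \<in> braid_eq n"
        using IH[of u u'] red snoc by simp
      then show ?thesis
        using braid_eq_append_right[OF _ gens(1)] snoc w' True by simp
    next
      case False
      obtain x x' where x: "reduced n x" "perm_of n x = perm_of n u"
        and x': "reduced n x'" "perm_of n x' = perm_of n u'"
        and rel: "(x @ [i], x' @ [j]) \<in> braid_eq n"
        using reduced_snocs_braid_rel[of n u i u' j] less.prems snoc w' False by blast
      have "(u, x) \<in> braid_eq n" "(u', x') \<in> braid_eq n"
        using IH[of u x] IH[of u' x'] x x' red len snoc w' by simp_all
      then have "(u @ [i], x @ [i]) \<in> braid_eq n"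
        using braid_eq_append_right gens(1) by blast
      also note rel
      also have "(x' @ [j], u' @ [j]) \<in> braid_eq n"
        using braid_eq_sym braid_eq_append_right gens(2) \<open>(u', x') \<in> braid_eq n\<close> by blast
      finally show ?thesis using snoc w' by simp
    qed
  qed
qed

section \<open>Simple braids are the reduced words\<close>

lemma word_act_upt:
  "m < length xs \<Longrightarrow> word_act [1..<Suc m] xs = take m (drop 1 xs) @ xs ! 0 # drop (Suc m) xs"
proof (induction m)
  case (Suc m)
  have drop_xs: "drop (Suc m) xs = xs ! Suc m # drop (Suc (Suc m)) xs"
    using Suc.prems by (simp add: Cons_nth_drop_Suc)
  have "word_act [1..<Suc (Suc m)] xs = swap_adj m (take m (drop 1 xs) @ xs ! 0 # drop (Suc m) xs)"
    using Suc by simp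
  also have "\<dots> = take m (drop 1 xs) @ swap_adj 0 (xs ! 0 # drop (Suc m) xs)"
    using swap_adj_append[of "take m (drop 1 xs)" 0] Suc.prems by simp
  also have "\<dots> = take (Suc m) (drop 1 xs) @ xs ! 0 # drop (Suc (Suc m)) xs"
    using drop_xs Suc.prems by (simp add: take_Suc_conv_app_nth)
  finally show ?case .
qed (cases xs; simp)

lemma word_act_rev_upt:
  "m < length xs \<Longrightarrow> word_act (rev [1..<Suc m]) xs = xs ! m # take m xs @ drop (Suc m) xs"
proof (induction m arbitrary: xs)
  case (Suc m)
  define ys where "ys = swap_adj m xs"
  have ys: "ys = xs[m := xs ! Suc m, Suc m := xs ! m]"
    using Suc.prems by (simp add: ys_def swap_adj_conv_list_update)
  have drop_ys: "drop (Suc m) ys = xs ! m # drop (Suc (Suc m)) xs"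
    using Suc.prems unfolding ys by (subst Cons_nth_drop_Suc[symmetric]) auto
  have "word_act (rev [1..<Suc (Suc m)]) xs = ys ! m # take m ys @ drop (Suc m) ys"
    using Suc by (simp add: ys_def)
  also have "\<dots> = xs ! Suc m # take (Suc m) xs @ drop (Suc (Suc m)) xs"
    using Suc.prems drop_ys unfolding ys
    by (simp add: nth_list_update take_Suc_conv_app_nth drop_update_cancel)
  finally show ?case .
qed (auto simp: neq_Nil_conv)

lemma word_act_Delta:
  "m \<le> length xs \<Longrightarrow> word_act (Delta m) xs = rev (take m xs) @ drop m xs"
proof (induction m arbitrary: xs)
  case (Suc m)
  define ys where "ys = take m (drop 1 xs) @ xs ! 0 # drop (Suc m) xs"
  have "word_act (Delta (Suc m)) xs = word_act (Delta m) ys"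
    using word_act_upt[of m xs] Suc.prems by (simp add: ys_def)
  also have "\<dots> = rev (take m ys) @ drop m ys"
    using Suc.IH Suc.prems by (simp add: ys_def)
  also have "\<dots> = rev (take (Suc m) xs) @ drop (Suc m) xs"
    using Suc.prems by (cases xs) (auto simp: ys_def min_def)
  finally show ?case .
qed simp

lemma word_act_rev_Delta:
  "m \<le> length xs \<Longrightarrow> word_act (rev (Delta m)) xs = rev (take m xs) @ drop m xs"
proof (induction m arbitrary: xs)
  case (Suc m)
  define ys where "ys = rev (take m xs) @ drop m xs"
  have "word_act (rev (Delta (Suc m))) xs = word_act (rev [1..<Suc m]) ys"
    using Suc by (simp add: ys_def)
  also have "\<dots> = ys ! m # take m ys @ drop (Suc m) ys"
    by (rule word_act_rev_upt) (use Suc.prems in \<open>simp add: ys_def\<close>)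
  also have "\<dots> = rev (take (Suc m) xs) @ drop (Suc m) xs"
    using Suc.prems by (simp add: ys_def nth_append take_Suc_conv_app_nth min_def)
  finally show ?case .
qed simp

lemma perm_of_Delta: "m \<le> n \<Longrightarrow> perm_of n (Delta m) = rev [0..<m] @ [m..<n]"
  by (simp add: perm_of_def word_act_Delta)

lemma perm_of_rev_Delta: "m \<le> n \<Longrightarrow> perm_of n (rev (Delta m)) = rev [0..<m] @ [m..<n]"
  by (simp add: perm_of_def word_act_rev_Delta)

lemma Delta_in_lists: "m \<le> n \<Longrightarrow> Delta m \<in> lists (gens n)"
proof -
  have "set (Delta m) \<subseteq> {1..<m}" by (induction m) auto
  then show "m \<le> n \<Longrightarrow> Delta m \<in> lists (gens n)" by (auto simp: gens_def)
qed

lemma inversions_rev_upt: "inversions (rev [0..<m]) = length (Delta m)"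
proof (induction m)
  case (Suc m)
  have "filter (\<lambda>y. y < m) (rev [0..<m]) = rev [0..<m]" by (simp add: filter_id_conv)
  then show ?case using Suc by simp
qed simp

lemma inversions_perm_of_Delta: "m \<le> n \<Longrightarrow> inversions (rev [0..<m] @ [m..<n]) = length (Delta m)"
  by (simp add: inversions_append inversions_sorted inversions_rev_upt)

lemma reduced_Delta: "m \<le> n \<Longrightarrow> reduced n (Delta m)"
  by (simp add: reduced_def Delta_in_lists perm_of_Delta inversions_perm_of_Delta)

lemma reduced_rev_Delta: "m \<le> n \<Longrightarrow> reduced n (rev (Delta m))"
  using Delta_in_lists[of m n]
  by (simp add: reduced_def perm_of_rev_Delta inversions_perm_of_Delta in_lists_conv_set)

lemma descents_rev_upt_append_upt: "m \<le> n \<Longrightarrow> descents (rev [0..<m] @ [m..<n]) = {1..<m}"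
  by (auto simp: descents_def nth_append rev_nth)

lemma exists_word_to_rev_upt:
  assumes "L \<in> permutations_of_set {0..<n}"
  shows "\<exists>z \<in> lists (gens n). word_act z L = rev [0..<n] \<and>
           inversions (rev [0..<n]) = inversions L + length z"
  using assms
proof (induction "n * n - inversions L" arbitrary: L rule: less_induct)
  case less
  have L: "distinct L" "set L = {0..<n}" "length L = n"
    using less.prems by (auto simp: permutations_of_set_def length_finite_permutations_of_set)
  show ?case
  proof (cases "\<exists>k. Suc k < n \<and> L ! k < L ! Suc k")
    case True
    then obtain k where k: "Suc k < n" "L ! k < L ! Suc k" by blast
    have inc: "inversions (swap_adj k L) = inversions L + 1"
      using inversions_swap_adj_ascent[OF L(1)] k L by simp
    moreover have "inversions (swap_adj k L) \<le> n * n"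
      using inversions_le_square[of "swap_adj k L"] L by simp
    moreover have "swap_adj k L \<in> permutations_of_set {0..<n}"
      using L by (auto simp: permutations_of_set_def)
    ultimately obtain z where "z \<in> lists (gens n)" "word_act z (swap_adj k L) = rev [0..<n]"
      "inversions (rev [0..<n]) = inversions (swap_adj k L) + length z"
      using less.hyps[of "swap_adj k L"] by (auto simp: diff_less_mono2)
    then show ?thesis
      using inc k by (intro bexI[of _ "Suc k # z"]) (auto simp: gens_iff)
  next
    case False
    then have "sorted (rev L)"
      unfolding sorted_rev_iff_nth_Suc using L(3) by (metis not_less)
    then have "rev L = [0..<n]"
      using L by (intro sorted_distinct_set_unique) auto
    then have "L = rev [0..<n]" by (metis rev_rev_ident)
    then show ?thesis by (intro bexI[of _ "[]"]) auto
  qed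
qed

lemma simple_iff_reduced: "simple n x \<longleftrightarrow> reduced n x"
proof
  assume "simple n x"
  then obtain z where z: "x \<in> lists (gens n)" "z \<in> lists (gens n)" "(x @ z, Delta n) \<in> braid_eq n"
    unfolding simple_def left_div_def by blast
  have "reduced n (x @ z)"
    using reduced_braid_eq[OF z(3)] reduced_Delta[of n n] z by simp
  then show "reduced n x" by (rule reduced_appendD)
next
  assume x: "reduced n x"
  obtain z where z: "z \<in> lists (gens n)" "word_act z (perm_of n x) = rev [0..<n]"
    "inversions (rev [0..<n]) = inversions (perm_of n x) + length z"
    using exists_word_to_rev_upt[OF perm_of_in_permutations] by blast
  have "reduced n (x @ z)" "perm_of n (x @ z) = perm_of n (Delta n)"
    using x z by (simp_all add: reduced_def perm_of_append perm_of_Delta)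
  then have "(x @ z, Delta n) \<in> braid_eq n"
    using matsumoto reduced_Delta by blast
  then show "simple n x"
    using x z(1) unfolding simple_def left_div_def reduced_def by blast
qed

lemma DR_eq_descents:
  assumes y: "reduced n y"
  shows "DR n y = descents (perm_of n y)"
proof (intro equalityI subsetI)
  fix i assume "i \<in> DR n y"
  then obtain z where z: "z \<in> lists (gens n)" "i \<in> gens n" "(z @ [i], y) \<in> braid_eq n"
    unfolding DR_def right_div_def by blast
  have "reduced n (z @ [i])"
    using reduced_braid_eq[OF z(3)] y z by simp
  then show "i \<in> descents (perm_of n y)"
    using reduced_snoc_descent braid_eq_perm_of[OF z(3)] by metis
next
  fix i assume i: "i \<in> descents (perm_of n y)"
  then have "i \<in> gens n" by (auto simp: descents_def gens_iff)
  have "swap_adj (i - 1) (perm_of n y) \<in> permutations_of_set {0..<n}"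
    by (auto simp: permutations_of_set_def)
  then obtain z where z: "reduced n z" "perm_of n z = swap_adj (i - 1) (perm_of n y)"
    using exists_reduced_word by blast
  have "reduced n (z @ [i])"
    using z y \<open>i \<in> gens n\<close> inversions_swap_adj_descents[OF distinct_perm_of i]
    by (simp add: reduced_def)
  moreover have "perm_of n (z @ [i]) = perm_of n y"
    using z by simp
  ultimately have "(z @ [i], y) \<in> braid_eq n"
    using matsumoto y by blast
  then show "i \<in> DR n y"
    using z \<open>i \<in> gens n\<close> unfolding DR_def right_div_def reduced_def by blast
qed

lemma DL_Delta: "m \<le> n \<Longrightarrow> DL n (Delta m) = {1..<m}"
  by (simp add: DL_eq_DR_rev DR_eq_descents reduced_rev_Delta perm_of_rev_Delta
      descents_rev_upt_append_upt)

section \<open>Counting normal pairs\<close>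

lemma card_image_eq_if_same_kernel:
  assumes "\<And>x y. x \<in> X \<Longrightarrow> y \<in> X \<Longrightarrow> f x = f y \<longleftrightarrow> g x = g y"
  shows "card (f ` X) = card (g ` X)"
proof -
  define h where "h v = f (SOME x. x \<in> X \<and> g x = v)" for v
  have hg: "h (g x) = f x" if "x \<in> X" for x
  proof -
    have "(SOME x'. x' \<in> X \<and> g x' = g x) \<in> X \<and> g (SOME x'. x' \<in> X \<and> g x' = g x) = g x"
      using someI_ex[of "\<lambda>x'. x' \<in> X \<and> g x' = g x"] that by blast
    then show ?thesis using assms that unfolding h_def by blast
  qed
  have "h ` g ` X = f ` X"
    unfolding image_image by (rule image_cong) (simp_all add: hg)
  moreover have "inj_on h (g ` X)"
  proof (rule inj_onI)
    fix a b assume "a \<in> g ` X" "b \<in> g ` X" "h a = h b"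
    then obtain x y where "x \<in> X" "y \<in> X" "a = g x" "b = g y" "f x = f y"
      using hg by auto
    then show "a = b" using assms by blast
  qed
  ultimately show ?thesis by (metis card_image)
qed

lemma descents_superset_iff_sorted_rev_take:
  assumes "distinct xs" "m \<le> length xs"
  shows "{1..<m} \<subseteq> descents xs \<longleftrightarrow> sorted (rev (take m xs))"
proof -
  have "{1..<m} \<subseteq> descents xs \<longleftrightarrow> (\<forall>i. 0 < i \<and> i < m \<longrightarrow> xs ! i < xs ! (i - 1))"
    using assms(2) by (auto simp: descents_def subset_iff)
  also have "\<dots> \<longleftrightarrow> (\<forall>k. Suc k < m \<longrightarrow> xs ! Suc k < xs ! k)"
  proof safe
    fix i assume "\<forall>k. Suc k < m \<longrightarrow> xs ! Suc k < xs ! k" "0 < i" "i < m"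
    then show "xs ! i < xs ! (i - 1)" by (cases i) auto
  qed auto
  also have "\<dots> \<longleftrightarrow> (\<forall>k. Suc k < m \<longrightarrow> xs ! Suc k \<le> xs ! k)"
    using assms by (auto simp: order.order_iff_strict nth_eq_iff_index_eq)
  also have "\<dots> \<longleftrightarrow> sorted (rev (take m xs))"
    unfolding sorted_rev_iff_nth_Suc using assms by auto
  finally show ?thesis .
qed

lemma card_permutations_sorted_rev_take:
  fixes A :: "'a::linorder set"
  assumes "finite A" "m \<le> card A"
  shows "card {xs \<in> permutations_of_set A. sorted (rev (take m xs))} = fact (card A) div fact m"
proof -
  define D where "D = {xs \<in> permutations_of_set A. sorted (rev (take m xs))}"
  define T where "T = {ys. length ys = card A - m \<and> distinct ys \<and> set ys \<subseteq> A}"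
  have D: "set xs = A" "distinct xs" "length xs = card A" if "xs \<in> D" for xs
    using that by (auto simp: D_def permutations_of_set_def length_finite_permutations_of_set)
  have set_take: "set (take m xs) = A - set (drop m xs)" if "xs \<in> D" for xs
  proof -
    have "set (take m xs) \<union> set (drop m xs) = A"
      using D(1)[OF that] by (metis set_append append_take_drop_id)
    moreover have "set (take m xs) \<inter> set (drop m xs) = {}"
      using D(2)[OF that] by (simp add: set_take_disj_set_drop_if_distinct)
    ultimately show ?thesis by blast
  qed
  have "inj_on (drop m) D"
  proof (rule inj_onI)
    fix xs ys assume xs: "xs \<in> D" and ys: "ys \<in> D" and eq: "drop m xs = drop m ys"
    have "rev (take m xs) = rev (take m ys)"
      using xs ys set_take[OF xs] set_take[OF ys] eq D[OF xs] D[OF ys]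
      by (intro sorted_distinct_set_unique) (auto simp: D_def)
    then show "xs = ys" using eq by (metis append_take_drop_id rev_rev_ident)
  qed
  moreover have "drop m ` D = T"
  proof (intro equalityI subsetI)
    fix ys assume "ys \<in> drop m ` D"
    then show "ys \<in> T" using D by (auto simp: T_def dest: in_set_dropD)
  next
    fix ys assume ys: "ys \<in> T"
    define xs where "xs = rev (sorted_list_of_set (A - set ys)) @ ys"
    have "card (A - set ys) = m"
      using ys assms by (simp add: T_def card_Diff_subset distinct_card)
    then have "drop m xs = ys" "xs \<in> D"
      using ys assms by (auto simp: xs_def D_def T_def permutations_of_set_def)
    then show "ys \<in> drop m ` D" by (metis image_eqI)
  qed
  ultimately have "card D = card T"
    by (metis card_image)
  also have "\<dots> = \<Prod>{m + 1..card A}"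
    unfolding T_def using card_lists_distinct_length_eq[OF assms(1), of "card A - m"] assms(2) by simp
  also have "\<dots> = fact (card A) div fact m"
    using fact_div_fact[OF assms(2)] by simp
  finally show ?thesis unfolding D_def .
qed

lemma card_permutations_descents_prefix:
  assumes "m \<le> n"
  shows "card {L \<in> permutations_of_set {0..<n}. {1..<m} \<subseteq> descents L} = fact n div fact m"
proof -
  have "{1..<m} \<subseteq> descents L \<longleftrightarrow> sorted (rev (take m L))"
    if "L \<in> permutations_of_set {0..<n}" for L
    using descents_superset_iff_sorted_rev_take[of L m] that assms
    by (simp add: permutations_of_setD length_finite_permutations_of_set)
  then have "{L \<in> permutations_of_set {0..<n}. {1..<m} \<subseteq> descents L} =
             {L \<in> permutations_of_set {0..<n}. sorted (rev (take m L))}"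
    by blast
  then show ?thesis
    using card_permutations_sorted_rev_take[of "{0..<n}" m] assms by simp
qed

lemma normal_seq_pair: "normal_seq n [x, y] \<longleftrightarrow> simple n x \<and> simple n y \<and> DL n y \<subseteq> DR n x"
  unfolding normal_seq_def by (auto simp: less_Suc_eq)

lemma b_2_eq_card:
  assumes "simple n y"
  shows "b n 2 y = card (braid_cls n ` {x. simple n x \<and> DL n y \<subseteq> DR n x})"
proof -
  let ?X = "{x. simple n x \<and> DL n y \<subseteq> DR n x}"
  have y: "y \<in> lists (gens n)" using assms by (simp add: simple_def)
  have "{map (braid_cls n) ws | ws. length ws = 2 \<and> normal_seq n ws \<and> (last ws, y) \<in> braid_eq n}
        = (\<lambda>c. [c, braid_cls n y]) ` braid_cls n ` ?X"
  proof (intro equalityI subsetI)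
    fix s assume "s \<in> {map (braid_cls n) ws | ws. length ws = 2 \<and> normal_seq n ws \<and> (last ws, y) \<in> braid_eq n}"
    then obtain x y' where s: "s = [braid_cls n x, braid_cls n y']"
      and normal: "normal_seq n [x, y']" and y': "(y', y) \<in> braid_eq n"
      by (auto simp: numeral_2_eq_2 length_Suc_conv)
    then have "x \<in> ?X" using DL_braid_eq normal_seq_pair by blast
    moreover have "braid_cls n y' = braid_cls n y" using braid_cls_eq_iff[OF y] y' by blast
    ultimately show "s \<in> (\<lambda>c. [c, braid_cls n y]) ` braid_cls n ` ?X" using s by blast
  next
    fix s assume "s \<in> (\<lambda>c. [c, braid_cls n y]) ` braid_cls n ` ?X"
    then obtain x where "x \<in> ?X" "s = map (braid_cls n) [x, y]" by auto
    then show "s \<in> {map (braid_cls n) ws | ws. length ws = 2 \<and> normal_seq n ws \<and> (last ws, y) \<in> braid_eq n}"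
      using assms normal_seq_pair by fastforce
  qed
  then show ?thesis by (simp add: b_def card_image inj_on_def)
qed

lemma card_braid_cls_eq_card_perm_of:
  assumes "\<And>x. x \<in> X \<Longrightarrow> reduced n x"
  shows "card (braid_cls n ` X) = card (perm_of n ` X)"
proof (rule card_image_eq_if_same_kernel)
  fix x y assume "x \<in> X" "y \<in> X"
  then show "braid_cls n x = braid_cls n y \<longleftrightarrow> perm_of n x = perm_of n y"
    using assms braid_cls_eq_iff braid_eq_perm_of matsumoto by (metis reduced_def)
qed

lemma perm_of_image_reduced_DR:
  "perm_of n ` {x. reduced n x \<and> A \<subseteq> DR n x} = {L \<in> permutations_of_set {0..<n}. A \<subseteq> descents L}"
proof (intro equalityI subsetI)
  fix L assume "L \<in> perm_of n ` {x. reduced n x \<and> A \<subseteq> DR n x}"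
  then show "L \<in> {L \<in> permutations_of_set {0..<n}. A \<subseteq> descents L}"
    using DR_eq_descents perm_of_in_permutations by auto
next
  fix L assume L: "L \<in> {L \<in> permutations_of_set {0..<n}. A \<subseteq> descents L}"
  then obtain x where "reduced n x" "perm_of n x = L"
    using exists_reduced_word by blast
  then show "L \<in> perm_of n ` {x. reduced n x \<and> A \<subseteq> DR n x}"
    using L DR_eq_descents by blast
qed

theorem proposition4p4:
  fixes n r :: nat
  assumes "1 \<le> r" and "r \<le> n"
  shows "b n 2 (Delta (n - r)) = fact n div fact (n - r)"
proof -
  define m where "m = n - r"
  have "m \<le> n" by (simp add: m_def)
  let ?X = "{x. reduced n x \<and> {1..<m} \<subseteq> DR n x}"
  have "b n 2 (Delta m) = card (braid_cls n ` ?X)"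
    using b_2_eq_card[of n "Delta m"] reduced_Delta DL_Delta \<open>m \<le> n\<close>
    by (simp add: simple_iff_reduced)
  also have "\<dots> = card (perm_of n ` ?X)"
    by (rule card_braid_cls_eq_card_perm_of) simp
  also have "\<dots> = fact n div fact m"
    using card_permutations_descents_prefix[OF \<open>m \<le> n\<close>] by (simp add: perm_of_image_reduced_DR)
  finally show ?thesis by (simp add: m_def)
qed

end
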